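(* Let $\{x^k\}$ be generated by the ABP algorithm described in the context, and assume (A1)–(A7): (A1) $\mathcal F$ is continuously differentiable; (A2) $C$, $Q$ nonempty closed convex, $z_i^*>-\infty$ for each $i$; (A3) each $f_i$ convex; (A4) $\Omega\ne\emptyset$; (A5) $\lambda_k>0$, $\sum\lambda_k=\infty$, $\sum\lambda_k^2<\infty$; (A6) $0<\underline\alpha\le\alpha_k\le\bar\alpha$, $0<\underline\beta\le\beta_k\le\bar\beta$, $0<\underline\gamma\le\gamma_k\le\bar\gamma$ for all $k$; (A7) $\varphi_{\mathrm{lb}}=\varphi^*$. Then there exist a subsequence $\{k_j\}$ and a point $x^\infty\in\Omega$ with $x^{k_j}\to x^\infty$.
   Context: Let $n,m\ge1$, $\mathcal F=(f_1,\dots,f_m)\colon\mathbb R^n\to\mathbb R^m$, $C\subset\mathbb R^n$, $Q\subset\mathbb R^m$, $Q^+:=Q-\mathbb R^m_+=\{y-u:y\in Q,u\in\mathbb R^m_+\}$; $P_S$ is Euclidean projection onto a nonempty closed convex set $S$. Let $z_i^*:=\inf_{x\in C}f_i(x)$, fix $r$ with $r_i>0$, $\sum r_i=1$. Define $\varphi(x):=\max_ir_i(f_i(x)-z_i^* )$, $H(x):=\tfrac12\mathrm{dist}^2(x,C)$, $G(x):=\tfrac12\mathrm{dist}^2(\mathcal F(x),Q^+)$, $\mathcal S:=\{x:H(x)=0,G(x)=0\}$, $\varphi^*:=\inf_{\mathcal S}\varphi$, $\Omega:=\{x\in\mathcal S:\varphi(x)=\varphi^*\}$, $\varphi_{\mathrm{lb}}:=\inf_C\varphi$.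 ABP algorithm: given $x^0$, $\mu>0$, positive sequences $\{\alpha_k\},\{\beta_k\},\{\gamma_k\},\{\lambda_k\}$: $p^k:=P_{Q^+}(\mathcal F(x^k))$, $\rho^k:=\mathcal F(x^k)-p^k$, $z^k:=x^k-P_C(x^k)$, $v^k:=J_{\mathcal F}(x^k)^T\rho^k$, $w^k:=r_{i^*}\nabla f_{i^*}(x^k)$ with arbitrary $i^*\in\arg\max_ir_i(f_i(x^k)-z_i^* )$, $\Delta_k:=\varphi(x^k)-\varphi_{\mathrm{lb}}$, $d^k:=\alpha_k\mathbf 1_{\{\Delta_k\ge0\}}w^k+\beta_kz^k+\gamma_kv^k$, $\eta_k:=\max(\mu,\|d^k\|)$, $x^{k+1}:=x^k-(\lambda_k/\eta_k)d^k$. *)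

theory Defs
  imports "HOL-Analysis.Analysis"
begin

definition Qplus :: "(real^'m) set \<Rightarrow> (real^'m) set" where
  "Qplus Q = {y - u | y u. y \<in> Q \<and> (\<forall>i. 0 \<le> u $ i)}"

text \<open>Euclidean projection onto a set (closest point), applied to the closure
  so that it is the paper's P_S whenever S is closed.\<close>
definition proj :: "('a::euclidean_space) set \<Rightarrow> 'a \<Rightarrow> 'a" where
  "proj S x = closest_point (closure S) x"

definition zstar :: "(real^'n \<Rightarrow> real^'m) \<Rightarrow> (real^'n) set \<Rightarrow> 'm \<Rightarrow> real" where
  "zstar F C i = Inf ((\<lambda>x. F x $ i) ` C)"

definition phi :: "real^'m \<Rightarrow> (real^'n \<Rightarrow> real^'m) \<Rightarrow> (real^'n) set \<Rightarrow> real^'n \<Rightarrow> real" where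
  "phi r F C x = Max (range (\<lambda>i. r $ i * (F x $ i - zstar F C i)))"

definition Hfun :: "(real^'n) set \<Rightarrow> real^'n \<Rightarrow> real" where
  "Hfun C x = (1/2) * (infdist x C)\<^sup>2"

definition Gfun :: "(real^'n \<Rightarrow> real^'m) \<Rightarrow> (real^'m) set \<Rightarrow> real^'n \<Rightarrow> real" where
  "Gfun F Q x = (1/2) * (infdist (F x) (Qplus Q))\<^sup>2"

definition feas :: "(real^'n \<Rightarrow> real^'m) \<Rightarrow> (real^'n) set \<Rightarrow> (real^'m) set \<Rightarrow> (real^'n) set" where
  "feas F C Q = {x. Hfun C x = 0 \<and> Gfun F Q x = 0}"

definition phistar where
  "phistar r F C Q = Inf (phi r F C ` feas F C Q)"

definition Omega where
  "Omega r F C Q = {x \<in> feas F C Q. phi r F C x = phistar r F C Q}"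

definition philb where
  "philb r F C = Inf (phi r F C ` C)"

text \<open>One ABP step. g i x is the gradient of f_i at x; istar the chosen maximizing index.\<close>
definition abp_dir ::
  "real^'m \<Rightarrow> (real^'n \<Rightarrow> real^'m) \<Rightarrow> ('m \<Rightarrow> real^'n \<Rightarrow> real^'n) \<Rightarrow> (real^'n) set \<Rightarrow> (real^'m) set
   \<Rightarrow> 'm \<Rightarrow> real \<Rightarrow> real \<Rightarrow> real \<Rightarrow> real^'n \<Rightarrow> real^'n" where
  "abp_dir r F g C Q istar a b c x =
     (let p = proj (Qplus Q) (F x);
          \<rho> = F x - p;
          z = x - proj C x;
          v = (\<Sum>i\<in>UNIV. (\<rho> $ i) *\<^sub>R g i x);
          w = (r $ istar) *\<^sub>R g istar x;
          \<Delta> = phi r F C x - philb r F C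
      in (if \<Delta> \<ge> 0 then a else 0) *\<^sub>R w + b *\<^sub>R z + c *\<^sub>R v)"

end

theory Submission
  imports Defs
begin

(*
  Fix a reference point xb in Omega; by (A7), phi xb = phi_lb.  The gradient inequality for
  the convex f_i and the obtuse-angle property of Euclidean projections give

    d^k . (x^k - xb) >= alpha_k max 0 (phi x^k - phi_lb) + 2 beta_k H x^k + 2 gamma_k G x^k >= 0,

  where the G-term needs the residual rho^k to be componentwise nonnegative, which holds
  because Q^+ is stable under subtracting vectors of R^m_+.  For the normalized step this yields

    |x^(k+1) - xb|^2 <= |x^k - xb|^2 - 2 (lambda_k / eta_k) d^k . (x^k - xb) + lambda_k^2,

  so the iterates stay bounded, hence so do the directions and eta_k, and therefore
  sum_k lambda_k d^k . (x^k - xb) < oo.  Since sum_k lambda_k = oo, the products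
  d^k . (x^k - xb) become arbitrarily small infinitely often.  Along a convergent subsequence of
  such indices, the limit satisfies H = G = 0 and phi <= phi xb = phi^*, so it lies in Omega.
*)

section \<open>Convex functions and Euclidean projections\<close>

lemma convex_on_gradient_inequality:
  fixes f :: "'a::real_inner \<Rightarrow> real"
  assumes convex: "convex_on UNIV f" and deriv: "(f has_derivative (\<lambda>h. G \<bullet> h)) (at x)"
  shows "f x + G \<bullet> (y - x) \<le> f y"
proof -
  define u where "u = y - x"
  define h where "h t = f (x + t *\<^sub>R u)" for t :: real
  have "convex_on UNIV h"
  proof (rule convex_onI)
    fix s t a :: real assume a: "0 < a" "a < 1"
    have "x + ((1 - a) * s + a * t) *\<^sub>R u = (1 - a) *\<^sub>R (x + s *\<^sub>R u) + a *\<^sub>R (x + t *\<^sub>R u)"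
      by (simp add: algebra_simps)
    then show "h ((1 - a) *\<^sub>R s + a *\<^sub>R t) \<le> (1 - a) * h s + a * h t"
      unfolding h_def using convex_onD[OF convex, of a "x + s *\<^sub>R u" "x + t *\<^sub>R u"] a by simp
  qed simp
  moreover have "(h has_field_derivative (G \<bullet> u)) (at 0)"
  proof -
    have line: "((\<lambda>t::real. x + t *\<^sub>R u) has_derivative (\<lambda>t. t *\<^sub>R u)) (at 0)"
      by (auto intro!: derivative_eq_intros)
    have "(f has_derivative (\<lambda>h. G \<bullet> h)) (at (x + 0 *\<^sub>R u))"
      using deriv by simp
    from diff_chain_at[OF line this]
    have "(h has_derivative (\<lambda>t. G \<bullet> (t *\<^sub>R u))) (at 0)"
      unfolding h_def by (simp add: o_def)
    moreover have "(\<lambda>t. G \<bullet> (t *\<^sub>R u)) = (*) (G \<bullet> u)" by (simp add: fun_eq_iff)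
    ultimately show ?thesis by (simp add: has_field_derivative_def)
  qed
  ultimately have "G \<bullet> u \<le> h 1 - h 0"
    using convex_on_imp_above_tangent[of UNIV h 0 1 "G \<bullet> u"] by simp
  then show ?thesis by (simp add: h_def u_def)
qed

lemma has_derivative_components_imp_continuous_on:
  fixes F :: "'a::real_normed_vector \<Rightarrow> real^'m"
  assumes "\<forall>i y. ((\<lambda>u. F u $ i) has_derivative D i y) (at y)"
  shows "continuous_on UNIV F"
proof -
  have "continuous_on UNIV (\<lambda>u. \<chi> i. F u $ i)"
    using assms by (intro continuous_on_vec_lambda has_derivative_continuous_on) auto
  then show ?thesis by simp
qed

lemma infdist_eq_dist_proj:
  fixes S :: "'a::euclidean_space set"
  assumes "S \<noteq> {}"
  shows "infdist y S = dist y (proj S y)"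
  using assms setdist_closest_point[of "closure S" y]
  by (simp add: infdist_eq_setdist proj_def)

lemma norm_diff_proj_le:
  fixes S :: "'a::euclidean_space set"
  assumes "z \<in> S"
  shows "norm (y - proj S y) \<le> norm (y - z)"
proof -
  have "S \<noteq> {}" using assms by auto
  then show ?thesis using infdist_le[OF assms, of y] by (simp add: infdist_eq_dist_proj dist_norm)
qed

lemma proj_residual_inner_ge:
  fixes S :: "'a::euclidean_space set"
  assumes "convex S" "z \<in> closure S"
  shows "(norm (y - proj S y))\<^sup>2 \<le> (y - proj S y) \<bullet> (y - z)"
proof -
  define p where "p = proj S y"
  have "(y - p) \<bullet> (z - p) \<le> 0"
    unfolding p_def proj_def
    using closest_point_dot[OF convex_closure[OF assms(1)] closed_closure assms(2)] .
  moreover have "(y - p) \<bullet> (y - z) = (norm (y - p))\<^sup>2 - (y - p) \<bullet> (z - p)"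
    by (simp add: power2_norm_eq_inner algebra_simps inner_diff_right)
  ultimately show ?thesis by (simp add: p_def)
qed

lemma tendsto_Max:
  fixes f :: "'i \<Rightarrow> 'a \<Rightarrow> 'b::linorder_topology"
  assumes "finite I" "I \<noteq> {}" "\<And>i. i \<in> I \<Longrightarrow> ((\<lambda>x. f i x) \<longlongrightarrow> l i) F"
  shows "((\<lambda>x. MAX i\<in>I. f i x) \<longlongrightarrow> (MAX i\<in>I. l i)) F"
  using assms by (induction I rule: finite_ne_induct) (auto intro: tendsto_max)

section \<open>Normalized step iterations\<close>

lemma normalized_step_dist_le:
  fixes x xb d :: "'a::real_inner"
  assumes "0 < mu" "0 \<le> lam"
  shows "(norm (x - (lam / max mu (norm d)) *\<^sub>R d - xb))\<^sup>2
           \<le> (norm (x - xb))\<^sup>2 - 2 * (lam / max mu (norm d)) * (d \<bullet> (x - xb)) + lam\<^sup>2"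
proof -
  define t where "t = lam / max mu (norm d)"
  have "t * norm d = lam * (norm d / max mu (norm d))" by (simp add: t_def)
  also have "\<dots> \<le> lam * 1"
    using assms by (intro mult_left_mono) (auto simp: divide_le_eq_1)
  finally have "(t * norm d)\<^sup>2 \<le> lam\<^sup>2"
    using assms by (intro power_mono) (auto simp: t_def)
  moreover have "x - t *\<^sub>R d - xb = (x - xb) - t *\<^sub>R d" by simp
  then have "(norm (x - t *\<^sub>R d - xb))\<^sup>2 = (norm (x - xb))\<^sup>2 - 2 * t * (d \<bullet> (x - xb)) + (t * norm d)\<^sup>2"
    unfolding power_mult_distrib power2_norm_eq_inner
    by (simp add: inner_diff_left inner_diff_right inner_commute algebra_simps power2_eq_square)
  ultimately show ?thesis unfolding t_def[symmetric] by linarith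
qed

lemma normalized_iteration_energy:
  fixes x d :: "nat \<Rightarrow> 'a::real_inner"
  assumes iter: "\<And>k. x (Suc k) = x k - (lam k / max mu (norm (d k))) *\<^sub>R d k"
    and "0 < mu" "\<And>k. 0 \<le> lam k"
  shows "(norm (x n - xb))\<^sup>2 + 2 * (\<Sum>k<n. lam k / max mu (norm (d k)) * (d k \<bullet> (x k - xb)))
           \<le> (norm (x 0 - xb))\<^sup>2 + (\<Sum>k<n. (lam k)\<^sup>2)"
proof (induction n)
  case (Suc n)
  have "(norm (x (Suc n) - xb))\<^sup>2
          \<le> (norm (x n - xb))\<^sup>2 - 2 * (lam n / max mu (norm (d n))) * (d n \<bullet> (x n - xb)) + (lam n)\<^sup>2"
    unfolding iter by (rule normalized_step_dist_le[OF assms(2,3)])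
  with Suc.IH show ?case by simp
qed simp

lemma normalized_iteration_bounded_summable:
  fixes x d :: "nat \<Rightarrow> 'a::real_inner"
  assumes iter: "\<And>k. x (Suc k) = x k - (lam k / max mu (norm (d k))) *\<^sub>R d k"
    and mu: "0 < mu" and lam: "\<And>k. 0 \<le> lam k" "summable (\<lambda>k. (lam k)\<^sup>2)"
    and nonneg: "\<And>k. 0 \<le> d k \<bullet> (x k - xb)"
    and dir_bounded: "\<And>R. \<exists>M. \<forall>k. norm (x k - xb) \<le> R \<longrightarrow> norm (d k) \<le> M"
  obtains R where "\<And>k. norm (x k - xb) \<le> R" and "summable (\<lambda>k. lam k * (d k \<bullet> (x k - xb)))"
proof -
  define t where "t k = lam k / max mu (norm (d k))" for k
  define q where "q k = d k \<bullet> (x k - xb)" for k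
  define B where "B = (norm (x 0 - xb))\<^sup>2 + (\<Sum>k. (lam k)\<^sup>2)"
  have tq: "0 \<le> t k * q k" for k
    using lam(1) nonneg mu by (simp add: t_def q_def)
  have energy: "(norm (x n - xb))\<^sup>2 + 2 * (\<Sum>k<n. t k * q k) \<le> B" for n
    using normalized_iteration_energy[where x = x and lam = lam and mu = mu and d = d and n = n
        and xb = xb, OF iter mu lam(1)] sum_le_suminf[OF lam(2), of "{..<n}"]
    by (simp add: B_def t_def q_def)
  define R where "R = sqrt B"
  have bound: "norm (x k - xb) \<le> R" for k
  proof -
    have "0 \<le> (\<Sum>j<k. t j * q j)" by (rule sum_nonneg) (rule tq)
    then have "(norm (x k - xb))\<^sup>2 \<le> B" using energy[of k] by linarith
    then show ?thesis unfolding R_def by (rule real_le_rsqrt)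
  qed
  obtain M where M: "\<And>k. norm (d k) \<le> M" using dir_bounded[of R] bound by blast
  have weighted_le: "lam k * q k \<le> max mu M * (t k * q k)" for k
  proof -
    have "lam k = max mu (norm (d k)) * t k" using mu by (simp add: t_def)
    also have "\<dots> \<le> max mu M * t k"
      using M[of k] mu lam(1)[of k] by (intro mult_right_mono) (auto simp: t_def)
    finally have "lam k * q k \<le> (max mu M * t k) * q k"
      using nonneg[of k] by (simp add: q_def mult_right_mono)
    then show ?thesis by (simp add: mult.assoc)
  qed
  have "summable (\<lambda>k. lam k * q k)"
  proof (intro summableI_nonneg_bounded[where x = "max mu M * (B / 2)"])
    show "(\<Sum>k<n. lam k * q k) \<le> max mu M * (B / 2)" for n
    proof -
      have "(\<Sum>k<n. lam k * q k) \<le> max mu M * (\<Sum>k<n. t k * q k)"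
        by (simp add: sum_distrib_left sum_mono weighted_le)
      also have "\<dots> \<le> max mu M * (B / 2)"
      proof (rule mult_left_mono)
        show "(\<Sum>k<n. t k * q k) \<le> B / 2"
          using energy[of n] zero_le_power2[of "norm (x n - xb)"] by linarith
      qed (use mu in simp)
      finally show ?thesis .
    qed
  qed (use lam(1) nonneg in \<open>simp add: q_def\<close>)
  then show thesis using that[OF bound] by (simp add: q_def)
qed

lemma frequently_small_if_summable_weighted:
  fixes lam q :: "nat \<Rightarrow> real"
  assumes "summable (\<lambda>k. lam k * q k)" "\<not> summable lam" "\<And>k. 0 \<le> lam k" "0 < e"
  shows "\<exists>k\<ge>N. q k < e"
proof (rule ccontr)
  assume "\<not> ?thesis"
  then have "summable lam"
    by (intro summable_comparison_test'[OF summable_divide[OF assms(1), of e], of N])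
      (use assms(3,4) in \<open>auto simp: le_divide_eq mult_left_mono\<close>)
  with assms(2) show False ..
qed

lemma subseq_tendsto_zero_if_frequently_small:
  fixes q :: "nat \<Rightarrow> real"
  assumes small: "\<And>e N. 0 < e \<Longrightarrow> \<exists>k\<ge>N. q k < e" and nonneg: "\<And>k. 0 \<le> q k"
  shows "\<exists>s. strict_mono s \<and> (\<lambda>j. q (s j)) \<longlonglongrightarrow> 0"
proof -
  obtain s where s: "\<And>j. q (s j) < inverse (real (Suc j)) \<and> s j < s (Suc j)"
    using dependent_nat_choice[of "\<lambda>j k. q k < inverse (real (Suc j))" "\<lambda>_ k k'. k < k'"]
      small by (metis Suc_le_eq inverse_positive_iff_positive of_nat_0_less_iff zero_less_Suc)
  have "(\<lambda>j. q (s j)) \<longlonglongrightarrow> 0"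
    by (rule tendsto_sandwich[OF _ _ tendsto_const LIMSEQ_inverse_real_of_nat])
      (use s nonneg in \<open>auto intro!: always_eventually intro: less_imp_le simp del: of_nat_Suc\<close>)
  then show ?thesis using s by (auto intro: strict_monoI_Suc)
qed

lemma normalized_iteration_subseq:
  fixes x d :: "nat \<Rightarrow> 'a::euclidean_space"
  assumes iter: "\<And>k. x (Suc k) = x k - (lam k / max mu (norm (d k))) *\<^sub>R d k"
    and mu: "0 < mu"
    and lam: "\<And>k. 0 < lam k" "\<not> summable lam" "summable (\<lambda>k. (lam k)\<^sup>2)"
    and nonneg: "\<And>k. 0 \<le> d k \<bullet> (x k - xb)"
    and dir_bounded: "\<And>R. \<exists>M. \<forall>k. norm (x k - xb) \<le> R \<longrightarrow> norm (d k) \<le> M"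
  obtains s l where "strict_mono s" "(\<lambda>j. x (s j)) \<longlonglongrightarrow> l"
    and "(\<lambda>j. d (s j) \<bullet> (x (s j) - xb)) \<longlonglongrightarrow> 0"
proof -
  define q where "q k = d k \<bullet> (x k - xb)" for k
  have lam_nonneg: "0 \<le> lam k" for k using lam(1) less_imp_le by blast
  obtain R where R: "\<And>k. norm (x k - xb) \<le> R" and summable: "summable (\<lambda>k. lam k * q k)"
    using normalized_iteration_bounded_summable[OF iter mu lam_nonneg lam(3) nonneg dir_bounded]
    unfolding q_def by blast
  obtain s0 where s0: "strict_mono s0" "(\<lambda>j. q (s0 j)) \<longlonglongrightarrow> 0"
    using subseq_tendsto_zero_if_frequently_small[of q]
      frequently_small_if_summable_weighted[OF summable lam(2) lam_nonneg] nonneg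
    unfolding q_def by blast
  have "range (x \<circ> s0) \<subseteq> cball xb R"
    using R by (auto simp: dist_norm norm_minus_commute)
  then have "bounded (range (x \<circ> s0))"
    using bounded_cball bounded_subset by blast
  then obtain l s1 where s1: "strict_mono s1" "((x \<circ> s0) \<circ> s1) \<longlonglongrightarrow> l"
    using bounded_imp_convergent_subsequence by blast
  have "(\<lambda>j. q (s0 (s1 j))) \<longlonglongrightarrow> 0"
    using LIMSEQ_subseq_LIMSEQ[OF s0(2) s1(1)] by (simp add: o_def)
  moreover have "strict_mono (s0 \<circ> s1)" using s0(1) s1(1) by (rule strict_mono_o)
  ultimately show thesis using s1(2) that[of "s0 \<circ> s1" l] by (simp add: q_def o_def)
qed

section \<open>Feasibility and scalarization\<close>

lemma subset_Qplus: "Q \<subseteq> Qplus Q"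
  unfolding Qplus_def by force

lemma convex_Qplus:
  fixes Q :: "(real^'m) set"
  assumes "convex Q"
  shows "convex (Qplus Q)"
  unfolding convex_def
proof (intro ballI allI impI)
  fix a b :: "real^'m" and s t :: real
  assume "a \<in> Qplus Q" "b \<in> Qplus Q" and st: "0 \<le> s" "0 \<le> t" "s + t = 1"
  then obtain y1 u1 y2 u2 where a: "a = y1 - u1" "y1 \<in> Q" "\<forall>i. 0 \<le> u1 $ i"
    and b: "b = y2 - u2" "y2 \<in> Q" "\<forall>i. 0 \<le> u2 $ i"
    unfolding Qplus_def by auto
  have "s *\<^sub>R a + t *\<^sub>R b = (s *\<^sub>R y1 + t *\<^sub>R y2) - (s *\<^sub>R u1 + t *\<^sub>R u2)"
    unfolding a(1) b(1) by (simp add: algebra_simps)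
  moreover have "s *\<^sub>R y1 + t *\<^sub>R y2 \<in> Q" using assms a b st unfolding convex_def by blast
  moreover have "\<forall>i. 0 \<le> (s *\<^sub>R u1 + t *\<^sub>R u2) $ i" using a b st by simp
  ultimately show "s *\<^sub>R a + t *\<^sub>R b \<in> Qplus Q" unfolding Qplus_def by blast
qed

lemma closure_Qplus_diff_nonneg:
  assumes "p \<in> closure (Qplus Q)" "\<forall>i. 0 \<le> u $ i"
  shows "p - u \<in> closure (Qplus Q)"
proof -
  have "(\<lambda>p. p - u) ` Qplus Q \<subseteq> Qplus Q"
  proof clarify
    fix p assume "p \<in> Qplus Q"
    then obtain y v where "p = y - v" "y \<in> Q" "\<forall>i. 0 \<le> v $ i" unfolding Qplus_def by auto
    then have "p - u = y - (v + u)" "\<forall>i. 0 \<le> (v + u) $ i" using assms(2) by auto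
    then show "p - u \<in> Qplus Q" unfolding Qplus_def using \<open>y \<in> Q\<close> by blast
  qed
  then have "(\<lambda>p. p - u) ` closure (Qplus Q) \<subseteq> closure (Qplus Q)"
    using closure_subset by (intro image_closure_subset) (auto intro!: continuous_intros)
  then show ?thesis using assms(1) by blast
qed

lemma proj_Qplus_residual_nonneg:
  fixes Q :: "(real^'m) set"
  assumes "Q \<noteq> {}" "convex Q"
  shows "0 \<le> (y - proj (Qplus Q) y) $ j"
proof -
  define p where "p = proj (Qplus Q) y"
  have "closure (Qplus Q) \<noteq> {}" using assms(1) subset_Qplus closure_subset by blast
  then have p: "p \<in> closure (Qplus Q)"
    unfolding p_def proj_def by (intro closest_point_in_set) auto
  have "(y - p) \<bullet> ((p - axis j 1) - p) \<le> 0"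
    unfolding p_def proj_def
    by (intro closest_point_dot convex_closure convex_Qplus assms(2) closed_closure
        closure_Qplus_diff_nonneg[OF p[unfolded p_def proj_def]]) (simp add: axis_def)
  then show ?thesis by (simp add: p_def inner_axis)
qed

lemma Hfun_eq:
  assumes "C \<noteq> {}"
  shows "Hfun C y = (norm (y - proj C y))\<^sup>2 / 2"
  using assms by (simp add: Hfun_def infdist_eq_dist_proj dist_norm)

lemma Gfun_eq:
  assumes "Q \<noteq> {}"
  shows "Gfun F Q y = (norm (F y - proj (Qplus Q) (F y)))\<^sup>2 / 2"
proof -
  have "Qplus Q \<noteq> {}" using assms subset_Qplus by blast
  then show ?thesis by (simp add: Gfun_def infdist_eq_dist_proj dist_norm)
qed

lemma mem_feas_iff:
  assumes "closed C" "C \<noteq> {}" "Q \<noteq> {}"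
  shows "x \<in> feas F C Q \<longleftrightarrow> x \<in> C \<and> F x \<in> closure (Qplus Q)"
proof -
  have "Qplus Q \<noteq> {}" using assms(3) subset_Qplus by blast
  then show ?thesis using assms(1,2)
    by (simp add: feas_def Hfun_def Gfun_def in_closed_iff_infdist_zero[symmetric]
        in_closure_iff_infdist_zero)
qed

lemma component_le_phi: "r $ j * (F y $ j - zstar F C j) \<le> phi r F C y"
  unfolding phi_def by (rule Max_ge) auto

lemma phi_eq_component:
  assumes "\<forall>j. r $ j * (F y $ j - zstar F C j) \<le> r $ i * (F y $ i - zstar F C i)"
  shows "phi r F C y = r $ i * (F y $ i - zstar F C i)"
  unfolding phi_def by (rule Max_eqI) (use assms in auto)

lemma phi_nonneg:
  assumes "y \<in> C" "bdd_below ((\<lambda>u. F u $ j) ` C)" "0 \<le> r $ j"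
  shows "0 \<le> phi r F C y"
proof -
  have "zstar F C j \<le> F y $ j" unfolding zstar_def using assms(1,2) by (intro cInf_lower) auto
  then show ?thesis
    using assms(3) component_le_phi[of r j F y C] by (meson diff_ge_0_iff_ge mult_nonneg_nonneg order_trans)
qed

lemma tendsto_phi:
  assumes "((\<lambda>k. F (y k)) \<longlongrightarrow> F l) L"
  shows "((\<lambda>k. phi r F C (y k)) \<longlongrightarrow> phi r F C l) L"
  unfolding phi_def by (intro tendsto_Max tendsto_intros assms) auto

section \<open>The ABP direction\<close>

lemma phi_diff_le_gradient_inner:
  assumes deriv: "((\<lambda>u. F u $ i) has_derivative (\<lambda>h. g i y \<bullet> h)) (at y)"
    and convex: "convex_on UNIV (\<lambda>u. F u $ i)"
    and max: "\<forall>j. r $ j * (F y $ j - zstar F C j) \<le> r $ i * (F y $ i - zstar F C i)"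
    and "0 \<le> r $ i"
  shows "phi r F C y - phi r F C xb \<le> (r $ i *\<^sub>R g i y) \<bullet> (y - xb)"
proof -
  have "F y $ i - F xb $ i \<le> g i y \<bullet> (y - xb)"
    using convex_on_gradient_inequality[OF convex deriv, of xb] by (simp add: inner_diff_right)
  then have "r $ i * (F y $ i - F xb $ i) \<le> r $ i * (g i y \<bullet> (y - xb))"
    using \<open>0 \<le> r $ i\<close> by (rule mult_left_mono)
  then show ?thesis
    using phi_eq_component[OF max] component_le_phi[of r i F xb C] by (simp add: algebra_simps)
qed

lemma Qplus_residual_sq_le_inner:
  fixes F :: "real^'n \<Rightarrow> real^'m"
  assumes deriv: "\<forall>j. ((\<lambda>u. F u $ j) has_derivative (\<lambda>h. g j y \<bullet> h)) (at y)"
    and convex: "\<forall>j. convex_on UNIV (\<lambda>u. F u $ j)"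
    and Q: "Q \<noteq> {}" "convex Q" and xb: "F xb \<in> closure (Qplus Q)"
  shows "(norm (F y - proj (Qplus Q) (F y)))\<^sup>2
           \<le> (\<Sum>j\<in>UNIV. (F y - proj (Qplus Q) (F y)) $ j *\<^sub>R g j y) \<bullet> (y - xb)"
proof -
  define \<rho> where "\<rho> = F y - proj (Qplus Q) (F y)"
  have "(norm \<rho>)\<^sup>2 \<le> \<rho> \<bullet> (F y - F xb)"
    unfolding \<rho>_def by (rule proj_residual_inner_ge[OF convex_Qplus[OF Q(2)] xb])
  also have "\<dots> = (\<Sum>j\<in>UNIV. \<rho> $ j * (F y $ j - F xb $ j))" by (simp add: inner_vec_def)
  also have "\<dots> \<le> (\<Sum>j\<in>UNIV. \<rho> $ j * (g j y \<bullet> (y - xb)))"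
  proof (rule sum_mono)
    fix j
    have "F y $ j - F xb $ j \<le> g j y \<bullet> (y - xb)"
      using convex_on_gradient_inequality[OF convex[rule_format, of j] deriv[rule_format, of j],
          of xb]
      by (simp add: inner_diff_right)
    then show "\<rho> $ j * (F y $ j - F xb $ j) \<le> \<rho> $ j * (g j y \<bullet> (y - xb))"
      using proj_Qplus_residual_nonneg[OF Q] by (intro mult_left_mono) (auto simp: \<rho>_def)
  qed
  also have "\<dots> = (\<Sum>j\<in>UNIV. \<rho> $ j *\<^sub>R g j y) \<bullet> (y - xb)" by (simp add: inner_sum_left)
  finally show ?thesis by (simp add: \<rho>_def)
qed

lemma abp_dir_inner_ge:
  fixes F :: "real^'n \<Rightarrow> real^'m"
  assumes deriv: "\<forall>j. ((\<lambda>u. F u $ j) has_derivative (\<lambda>h. g j y \<bullet> h)) (at y)"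
    and convex: "\<forall>j. convex_on UNIV (\<lambda>u. F u $ j)"
    and C: "convex C" "xb \<in> C" and Q: "Q \<noteq> {}" "convex Q" "F xb \<in> closure (Qplus Q)"
    and max: "\<forall>j. r $ j * (F y $ j - zstar F C j) \<le> r $ i * (F y $ i - zstar F C i)"
    and "0 \<le> r $ i" and xb_opt: "phi r F C xb \<le> philb r F C"
    and "0 \<le> a" "0 \<le> b" "0 \<le> c"
  shows "a * max 0 (phi r F C y - philb r F C) + 2 * b * Hfun C y + 2 * c * Gfun F Q y
           \<le> abp_dir r F g C Q i a b c y \<bullet> (y - xb)"
proof -
  define A where "A = (if 0 \<le> phi r F C y - philb r F C then a else 0)"
  define w where "w = r $ i *\<^sub>R g i y"
  define z where "z = y - proj C y"
  define \<rho> where "\<rho> = F y - proj (Qplus Q) (F y)"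
  define v where "v = (\<Sum>j\<in>UNIV. \<rho> $ j *\<^sub>R g j y)"
  have "abp_dir r F g C Q i a b c y \<bullet> (y - xb)
          = A * (w \<bullet> (y - xb)) + b * (z \<bullet> (y - xb)) + c * (v \<bullet> (y - xb))"
    unfolding abp_dir_def Let_def A_def w_def z_def v_def \<rho>_def by (simp add: inner_add_left)
  moreover have "a * max 0 (phi r F C y - philb r F C) \<le> A * (w \<bullet> (y - xb))"
  proof -
    have "phi r F C y - phi r F C xb \<le> w \<bullet> (y - xb)"
      unfolding w_def using deriv convex max \<open>0 \<le> r $ i\<close>
      by (intro phi_diff_le_gradient_inner) auto
    then show ?thesis using xb_opt \<open>0 \<le> a\<close> unfolding A_def by (auto intro: mult_left_mono)
  qed
  moreover have "2 * b * Hfun C y \<le> b * (z \<bullet> (y - xb))"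
  proof -
    have "(norm z)\<^sup>2 \<le> z \<bullet> (y - xb)"
      unfolding z_def using C closure_subset by (intro proj_residual_inner_ge) auto
    moreover have "C \<noteq> {}" using C(2) by blast
    then have "2 * Hfun C y = (norm z)\<^sup>2" by (simp add: Hfun_eq z_def)
    ultimately show ?thesis using \<open>0 \<le> b\<close> by (metis mult.assoc mult.commute mult_left_mono)
  qed
  moreover have "2 * c * Gfun F Q y \<le> c * (v \<bullet> (y - xb))"
  proof -
    have "(norm \<rho>)\<^sup>2 \<le> v \<bullet> (y - xb)"
      unfolding v_def \<rho>_def using deriv convex Q by (rule Qplus_residual_sq_le_inner)
    then show ?thesis using \<open>0 \<le> c\<close>
      by (simp add: Gfun_eq[OF Q(1)] \<rho>_def mult_left_mono)
  qed
  ultimately show ?thesis by linarith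
qed

lemma abp_dir_inner_ge_merits:
  fixes F :: "real^'n \<Rightarrow> real^'m"
  assumes deriv: "\<forall>j. ((\<lambda>u. F u $ j) has_derivative (\<lambda>h. g j y \<bullet> h)) (at y)"
    and convex: "\<forall>j. convex_on UNIV (\<lambda>u. F u $ j)"
    and C: "convex C" "xb \<in> C" and Q: "Q \<noteq> {}" "convex Q" "F xb \<in> closure (Qplus Q)"
    and max: "\<forall>j. r $ j * (F y $ j - zstar F C j) \<le> r $ i * (F y $ i - zstar F C i)"
    and "0 \<le> r $ i" and xb_opt: "phi r F C xb \<le> philb r F C"
    and a: "0 < alo" "alo \<le> a" and b: "0 < blo" "blo \<le> b" and c: "0 < clo" "clo \<le> c"
  shows "alo * (phi r F C y - philb r F C) \<le> abp_dir r F g C Q i a b c y \<bullet> (y - xb)"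
    and "2 * blo * Hfun C y \<le> abp_dir r F g C Q i a b c y \<bullet> (y - xb)"
    and "2 * clo * Gfun F Q y \<le> abp_dir r F g C Q i a b c y \<bullet> (y - xb)"
    and "0 \<le> abp_dir r F g C Q i a b c y \<bullet> (y - xb)"
proof -
  have key: "a * max 0 (phi r F C y - philb r F C) + 2 * b * Hfun C y + 2 * c * Gfun F Q y
               \<le> abp_dir r F g C Q i a b c y \<bullet> (y - xb)"
    using a b c
    by (intro abp_dir_inner_ge[where F = F and g = g and y = y and C = C and Q = Q and r = r
          and i = i, OF deriv convex C Q max \<open>0 \<le> r $ i\<close> xb_opt]) auto
  have H: "0 \<le> Hfun C y" and G: "0 \<le> Gfun F Q y" by (simp_all add: Hfun_def Gfun_def)
  have "alo * (phi r F C y - philb r F C) \<le> a * max 0 (phi r F C y - philb r F C)"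
    using a by (cases "phi r F C y \<le> philb r F C")
      (auto simp: mult_le_0_iff intro: mult_right_mono order_trans[OF _ mult_nonneg_nonneg])
  moreover have "blo * Hfun C y \<le> b * Hfun C y" "clo * Gfun F Q y \<le> c * Gfun F Q y"
    using b c H G by (simp_all add: mult_right_mono)
  moreover have "0 \<le> a * max 0 (phi r F C y - philb r F C)"
    "0 \<le> b * Hfun C y" "0 \<le> c * Gfun F Q y"
    using a b c H G by simp_all
  ultimately show "alo * (phi r F C y - philb r F C) \<le> abp_dir r F g C Q i a b c y \<bullet> (y - xb)"
    and "2 * blo * Hfun C y \<le> abp_dir r F g C Q i a b c y \<bullet> (y - xb)"
    and "2 * clo * Gfun F Q y \<le> abp_dir r F g C Q i a b c y \<bullet> (y - xb)"
    and "0 \<le> abp_dir r F g C Q i a b c y \<bullet> (y - xb)"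
    using key by linarith+
qed

lemma norm_abp_dir_le:
  fixes F :: "real^'n \<Rightarrow> real^'m"
  shows "norm (abp_dir r F g C Q i a b c y)
           \<le> \<bar>a\<bar> * (\<bar>r $ i\<bar> * norm (g i y)) + \<bar>b\<bar> * norm (y - proj C y)
             + \<bar>c\<bar> * (norm (F y - proj (Qplus Q) (F y)) * (\<Sum>j\<in>UNIV. norm (g j y)))"
proof -
  define A where "A = (if 0 \<le> phi r F C y - philb r F C then a else 0)"
  define \<rho> where "\<rho> = F y - proj (Qplus Q) (F y)"
  define v where "v = (\<Sum>j\<in>UNIV. \<rho> $ j *\<^sub>R g j y)"
  have "norm v \<le> (\<Sum>j\<in>UNIV. \<bar>\<rho> $ j\<bar> * norm (g j y))"
    unfolding v_def using norm_sum[of "\<lambda>j. \<rho> $ j *\<^sub>R g j y" UNIV] by simp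
  also have "\<dots> \<le> (\<Sum>j\<in>UNIV. norm \<rho> * norm (g j y))"
    by (intro sum_mono mult_right_mono component_le_norm_cart) simp
  finally have "norm v \<le> norm \<rho> * (\<Sum>j\<in>UNIV. norm (g j y))" by (simp add: sum_distrib_left)
  then have "norm (c *\<^sub>R v) \<le> \<bar>c\<bar> * (norm \<rho> * (\<Sum>j\<in>UNIV. norm (g j y)))"
    by (simp add: mult_left_mono)
  moreover have "norm (A *\<^sub>R (r $ i *\<^sub>R g i y)) \<le> \<bar>a\<bar> * (\<bar>r $ i\<bar> * norm (g i y))"
    by (simp add: A_def abs_mult)
  moreover have "norm (abp_dir r F g C Q i a b c y)
      \<le> norm (A *\<^sub>R (r $ i *\<^sub>R g i y)) + norm (b *\<^sub>R (y - proj C y)) + norm (c *\<^sub>R v)"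
    unfolding abp_dir_def Let_def A_def v_def \<rho>_def
    by (intro norm_triangle_le add_right_mono norm_triangle_ineq)
  ultimately show ?thesis unfolding \<rho>_def by simp
qed

lemma abp_dir_bounded:
  fixes F :: "real^'n \<Rightarrow> real^'m"
  assumes F: "continuous_on UNIV F" and g: "\<forall>j. continuous_on UNIV (g j)"
    and "C \<noteq> {}" "Q \<noteq> {}" "compact S"
  obtains M where "\<And>y i a b c. y \<in> S \<Longrightarrow> \<bar>a\<bar> \<le> ah \<Longrightarrow> \<bar>b\<bar> \<le> bh \<Longrightarrow> \<bar>c\<bar> \<le> ch
                     \<Longrightarrow> norm (abp_dir r F g C Q i a b c y) \<le> M"
proof -
  have "bounded (\<Union>j. g j ` S)"
    using g \<open>compact S\<close>
    by (intro bounded_UN) (auto intro: compact_imp_bounded compact_continuous_image continuous_on_subset)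
  then obtain G where G: "\<And>j y. y \<in> S \<Longrightarrow> norm (g j y) \<le> G" unfolding bounded_iff by blast
  have "bounded (F ` S)"
    using F \<open>compact S\<close>
    by (auto intro: compact_imp_bounded compact_continuous_image continuous_on_subset)
  then obtain B_F where B_F: "\<And>y. y \<in> S \<Longrightarrow> norm (F y) \<le> B_F" unfolding bounded_iff by blast
  obtain B where B: "\<And>y. y \<in> S \<Longrightarrow> norm y \<le> B"
    using compact_imp_bounded[OF \<open>compact S\<close>] unfolding bounded_iff by blast
  obtain c0 q0 where c0: "c0 \<in> C" and q0: "q0 \<in> Qplus Q"
    using \<open>C \<noteq> {}\<close> \<open>Q \<noteq> {}\<close> subset_Qplus by blast
  show thesis
  proof (rule that[of "ah * (norm r * G) + bh * (B + norm c0)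
                        + ch * ((B_F + norm q0) * (CARD('m) * G))"])
    fix y i a b c assume y: "y \<in> S" and abc: "\<bar>a\<bar> \<le> ah" "\<bar>b\<bar> \<le> bh" "\<bar>c\<bar> \<le> ch"
    have G0: "0 \<le> G" using G[OF y] norm_ge_zero order_trans by blast
    have "\<bar>a\<bar> * (\<bar>r $ i\<bar> * norm (g i y)) \<le> ah * (norm r * G)"
      using abc(1) G[OF y] G0 component_le_norm_cart[of r i] by (intro mult_mono) auto
    moreover have "\<bar>b\<bar> * norm (y - proj C y) \<le> bh * (B + norm c0)"
      using abc(2) norm_diff_proj_le[OF c0, of y] norm_triangle_ineq4[of y c0] B[OF y]
      by (intro mult_mono) auto
    moreover have "\<bar>c\<bar> * (norm (F y - proj (Qplus Q) (F y)) * (\<Sum>j\<in>UNIV. norm (g j y)))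
                     \<le> ch * ((B_F + norm q0) * (CARD('m) * G))"
    proof (intro mult_mono)
      show "norm (F y - proj (Qplus Q) (F y)) \<le> B_F + norm q0"
        using norm_diff_proj_le[OF q0, of "F y"] norm_triangle_ineq4[of "F y" q0] B_F[OF y]
        by linarith
      then show "0 \<le> B_F + norm q0" using norm_ge_zero order_trans by blast
      show "(\<Sum>j\<in>UNIV. norm (g j y)) \<le> CARD('m) * G"
        using sum_mono[of UNIV "\<lambda>j. norm (g j y)" "\<lambda>_. G"] G[OF y] by simp
    qed (use abc(3) in \<open>auto intro!: mult_nonneg_nonneg sum_nonneg\<close>)
    ultimately show "norm (abp_dir r F g C Q i a b c y)
        \<le> ah * (norm r * G) + bh * (B + norm c0) + ch * ((B_F + norm q0) * (CARD('m) * G))"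
      by (intro order.trans[OF norm_abp_dir_le] add_mono)
  qed
qed

lemma abp_dir_bounded_along:
  fixes F :: "real^'n \<Rightarrow> real^'m"
  assumes "continuous_on UNIV F" "\<forall>j. continuous_on UNIV (g j)" "C \<noteq> {}" "Q \<noteq> {}"
    and "\<And>k. \<bar>a k\<bar> \<le> ah" "\<And>k. \<bar>b k\<bar> \<le> bh" "\<And>k. \<bar>c k\<bar> \<le> ch"
  shows "\<exists>M. \<forall>k. norm (x k - xb) \<le> R
               \<longrightarrow> norm (abp_dir r F g C Q (i k) (a k) (b k) (c k) (x k)) \<le> M"
proof -
  obtain M where M: "\<And>y i a b c. y \<in> cball xb R \<Longrightarrow> \<bar>a\<bar> \<le> ah \<Longrightarrow> \<bar>b\<bar> \<le> bh \<Longrightarrow> \<bar>c\<bar> \<le> ch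
      \<Longrightarrow> norm (abp_dir r F g C Q i a b c y) \<le> M"
    using abp_dir_bounded[OF assms(1-4) compact_cball] by blast
  show ?thesis
  proof (intro exI allI impI)
    fix k assume "norm (x k - xb) \<le> R"
    then have "x k \<in> cball xb R" by (simp add: dist_norm norm_minus_commute)
    then show "norm (abp_dir r F g C Q (i k) (a k) (b k) (c k) (x k)) \<le> M"
      using assms(5-7) by (rule M)
  qed
qed

section \<open>Limit points\<close>

lemma limit_in_Omega:
  fixes y :: "nat \<Rightarrow> real^'n" and F :: "real^'n \<Rightarrow> real^'m"
  assumes lim: "y \<longlonglongrightarrow> l" "e \<longlonglongrightarrow> 0"
    and F: "continuous_on UNIV F" and C: "closed C" "C \<noteq> {}" and "Q \<noteq> {}"
    and r: "\<forall>j. 0 \<le> r $ j" and bdd: "\<forall>j. bdd_below ((\<lambda>u. F u $ j) ` C)"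
    and pos: "0 < a" "0 < b" "0 < c"
    and phi_le: "\<And>k. a * (phi r F C (y k) - phistar r F C Q) \<le> e k"
    and H_le: "\<And>k. b * Hfun C (y k) \<le> e k"
    and G_le: "\<And>k. c * Gfun F Q (y k) \<le> e k"
  shows "l \<in> Omega r F C Q"
proof -
  have limit_le: "a' * h l \<le> 0"
    if "(\<lambda>k. h (y k)) \<longlonglongrightarrow> h l" "\<And>k. a' * h (y k) \<le> e k" for a' h
    using LIMSEQ_le[OF tendsto_mult[OF tendsto_const that(1)] lim(2)] that(2) by auto
  have Fy: "(\<lambda>k. F (y k)) \<longlonglongrightarrow> F l"
    using continuous_on_tendsto_compose[OF F lim(1)] by simp
  have "b * Hfun C l \<le> 0"
    using H_le by (intro limit_le) (auto simp: Hfun_def intro!: tendsto_intros lim(1))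
  then have "Hfun C l = 0" using pos(2) by (simp add: Hfun_def mult_le_0_iff)
  moreover have "c * Gfun F Q l \<le> 0"
    using G_le by (intro limit_le) (auto simp: Gfun_def intro!: tendsto_intros Fy)
  then have "Gfun F Q l = 0" using pos(3) by (simp add: Gfun_def mult_le_0_iff)
  ultimately have feas: "l \<in> feas F C Q" by (simp add: feas_def)
  have "a * (phi r F C l - phistar r F C Q) \<le> 0"
    using phi_le by (intro limit_le) (auto intro!: tendsto_intros tendsto_phi Fy)
  then have "phi r F C l \<le> phistar r F C Q" using pos(1) by (simp add: mult_le_0_iff)
  moreover have "phistar r F C Q \<le> phi r F C l"
  proof -
    have "0 \<le> phi r F C x" if "x \<in> feas F C Q" for x
      using that mem_feas_iff[OF C \<open>Q \<noteq> {}\<close>] r bdd by (blast intro: phi_nonneg)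
    then show ?thesis
      unfolding phistar_def using feas by (intro cInf_lower bdd_belowI[where m = 0]) auto
  qed
  ultimately show ?thesis using feas by (simp add: Omega_def)
qed

theorem proposition6:
  fixes F :: "real^'n \<Rightarrow> real^'m"
    and g :: "'m \<Rightarrow> real^'n \<Rightarrow> real^'n"
    and C :: "(real^'n) set" and Q :: "(real^'m) set"
    and r :: "real^'m"
    and x :: "nat \<Rightarrow> real^'n" and istar :: "nat \<Rightarrow> 'm"
    and mu :: real
    and alpha beta gamma lam :: "nat \<Rightarrow> real"
    and alphalo alphahi betalo betahi gammalo gammahi :: real
  assumes r_pos: "\<forall>i. r $ i > 0" and r_sum: "(\<Sum>i\<in>UNIV. r $ i) = 1"
    and A1_deriv: "\<forall>i y. ((\<lambda>u. F u $ i) has_derivative (\<lambda>h. g i y \<bullet> h)) (at y)"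
    and A1_cont: "\<forall>i. continuous_on UNIV (g i)"
    and A2_C: "C \<noteq> {}" "closed C" "convex C"
    and A2_Q: "Q \<noteq> {}" "closed Q" "convex Q"
    and A2_z: "\<forall>i. bdd_below ((\<lambda>u. F u $ i) ` C)"
    and A3: "\<forall>i. convex_on UNIV (\<lambda>u. F u $ i)"
    and A4: "Omega r F C Q \<noteq> {}"
    and A5: "\<forall>k. lam k > 0" "\<not> summable lam" "summable (\<lambda>k. (lam k)\<^sup>2)"
    and A6: "0 < alphalo" "\<forall>k. alphalo \<le> alpha k \<and> alpha k \<le> alphahi"
            "0 < betalo" "\<forall>k. betalo \<le> beta k \<and> beta k \<le> betahi"
            "0 < gammalo" "\<forall>k. gammalo \<le> gamma k \<and> gamma k \<le> gammahi"
    and A7: "philb r F C = phistar r F C Q"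
    and mu_pos: "mu > 0"
    and istar: "\<forall>k j. r $ j * (F (x k) $ j - zstar F C j)
                        \<le> r $ istar k * (F (x k) $ istar k - zstar F C (istar k))"
    and iter: "\<forall>k. x (Suc k) = x k -
                 (lam k / max mu (norm (abp_dir r F g C Q (istar k) (alpha k) (beta k) (gamma k) (x k))))
                   *\<^sub>R abp_dir r F g C Q (istar k) (alpha k) (beta k) (gamma k) (x k)"
  shows "\<exists>s xinf. strict_mono s \<and> xinf \<in> Omega r F C Q \<and> (x \<circ> s) \<longlonglongrightarrow> xinf"
proof -
  obtain xb where xb: "xb \<in> Omega r F C Q" using A4 by auto
  have xb_feas: "xb \<in> C" "F xb \<in> closure (Qplus Q)"
    using xb mem_feas_iff[OF A2_C(2,1) A2_Q(1)] by (auto simp: Omega_def)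
  have xb_opt: "phi r F C xb = philb r F C" using xb A7 by (simp add: Omega_def)
  define d where "d k = abp_dir r F g C Q (istar k) (alpha k) (beta k) (gamma k) (x k)" for k
  define q where "q k = d k \<bullet> (x k - xb)" for k
  have merit: "alphalo * (phi r F C (x k) - philb r F C) \<le> q k"
    "2 * betalo * Hfun C (x k) \<le> q k" "2 * gammalo * Gfun F Q (x k) \<le> q k" "0 \<le> q k" for k
    unfolding q_def d_def
    by (rule abp_dir_inner_ge_merits[of F g "x k" C xb Q r "istar k"
          alphalo "alpha k" betalo "beta k" gammalo "gamma k"];
        use A1_deriv A3 A2_C(3) xb_feas A2_Q(1,3) istar r_pos xb_opt A6 in \<open>auto intro: less_imp_le\<close>)+
  have F_cont: "continuous_on UNIV F"
    using A1_deriv by (rule has_derivative_components_imp_continuous_on)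
  have "\<bar>alpha k\<bar> \<le> alphahi" "\<bar>beta k\<bar> \<le> betahi" "\<bar>gamma k\<bar> \<le> gammahi" for k
    using A6(1,3,5) A6(2,4,6)[rule_format, of k] by auto
  then have dir_bounded: "\<exists>M. \<forall>k. norm (x k - xb) \<le> R \<longrightarrow> norm (d k) \<le> M" for R
    unfolding d_def by (rule abp_dir_bounded_along[OF F_cont A1_cont A2_C(1) A2_Q(1)])
  obtain s l where s: "strict_mono s" "(\<lambda>j. x (s j)) \<longlonglongrightarrow> l" "(\<lambda>j. q (s j)) \<longlonglongrightarrow> 0"
  proof (rule normalized_iteration_subseq[where x = x and d = d and xb = xb])
    show "x (Suc k) = x k - (lam k / max mu (norm (d k))) *\<^sub>R d k" for k
      using iter by (simp add: d_def)
  qed (use mu_pos A5 merit(4) dir_bounded that in \<open>auto simp: q_def\<close>)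
  have "l \<in> Omega r F C Q"
    using A6(1,3,5) merit A7 r_pos
    by (intro limit_in_Omega[OF s(2,3) F_cont A2_C(2,1) A2_Q(1) _ A2_z,
          where a = alphalo and b = "2 * betalo" and c = "2 * gammalo"]) (auto intro: less_imp_le)
  with s show ?thesis by (auto simp: o_def)
qed

end
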